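(* Consider the reserve price problem (P): $\max_{\beta\in X}R(\beta)=\frac1n\sum_{i=1}^n r(w^i\cdot\beta;b_i^{(1)},b_i^{(2)})$, and the mixed-integer program (MIP): $$\max_{\beta,v,y,z}\ \frac1n\sum_{i=1}^n y_i\quad\text{s.t. } v_i=w^i\cdot\beta,\ \ (v_i,y_i,z^i)\in F(b_i^{(1)},b_i^{(2)},l_i,u_i)\ \ (i=1,\dots,n),\ \ \beta\in X,$$ with $z^i\in\mathbb{R}^3$. Then (i) if $(\beta,v,y,z)$ is an optimal solution of (MIP), $\beta$ is an optimal solution of (P); and (ii) if $\beta$ is an optimal solution of (P), there exist $v,y,z$ such that $(\beta,v,y,z)$ is an optimal solution of (MIP).
   Context: The reward function is $r(v;b^{(1)},b^{(2)})=b^{(2)}$ if $v\le b^{(2)}$, $=v$ if $b^{(2)}<v\le b^{(1)}$, and $=0$ if $v>b^{(1)}$. Data: $w^i\in\mathbb{R}^d$, $b_i^{(1)}\ge b_i^{(2)}\ge 0$ ($i=1,\dots,n$), $X=[L,U]^d$; $l_i=\min_{\beta\in X}w^i\cdot\beta$, $u_i=\max_{\beta\in X}w^i\cdot\beta$. For data $b^{(1)},b^{(2)},l,u$, $F(b^{(1)},b^{(2)},l,u)$ is the set of $(v,y,z)\in\mathbb{R}\times\mathbb{R}\times\mathbb{R}^3$ satisfying $y\le b^{(2)}z_1+b^{(1)}z_2$, $y\ge b^{(2)}(z_1+z_2)$, $y\le v+(b^{(2)}-l)z_1-b^{(1)}z_3$, $y\ge v-uz_3$, $l\le v\le u$, $z_1+z_2+z_3=1$,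 $z\in[0,1]^3$, and $z\in\mathbb{Z}^3$. *)

theory Defs
  imports "HOL-Analysis.Analysis"
begin

definition reward :: "real \<Rightarrow> real \<Rightarrow> real \<Rightarrow> real" where
  "reward v b1 b2 = (if v \<le> b2 then b2 else if v \<le> b1 then v else 0)"

definition boxX :: "real \<Rightarrow> real \<Rightarrow> (real^'d) set" where
  "boxX L U = {\<beta>. \<forall>j. L \<le> \<beta> $ j \<and> \<beta> $ j \<le> U}"

definition lo :: "real \<Rightarrow> real \<Rightarrow> (nat \<Rightarrow> real^'d) \<Rightarrow> nat \<Rightarrow> real" where
  "lo L U w i = Inf ((\<lambda>\<beta>. w i \<bullet> \<beta>) ` boxX L U)"

definition up :: "real \<Rightarrow> real \<Rightarrow> (nat \<Rightarrow> real^'d) \<Rightarrow> nat \<Rightarrow> real" where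
  "up L U w i = Sup ((\<lambda>\<beta>. w i \<bullet> \<beta>) ` boxX L U)"

definition Fset :: "real \<Rightarrow> real \<Rightarrow> real \<Rightarrow> real \<Rightarrow> (real \<times> real \<times> (real \<times> real \<times> real)) set" where
  "Fset b1 b2 l u = {(v, y, (z1, z2, z3)).
      y \<le> b2 * z1 + b1 * z2 \<and>
      y \<ge> b2 * (z1 + z2) \<and>
      y \<le> v + (b2 - l) * z1 - b1 * z3 \<and>
      y \<ge> v - u * z3 \<and>
      l \<le> v \<and> v \<le> u \<and>
      z1 + z2 + z3 = 1 \<and>
      z1 \<in> {0..1} \<and> z2 \<in> {0..1} \<and> z3 \<in> {0..1} \<and>
      z1 \<in> \<int> \<and> z2 \<in> \<int> \<and> z3 \<in> \<int>}"

definition Robj :: "nat \<Rightarrow> (nat \<Rightarrow> real^'d) \<Rightarrow> (nat \<Rightarrow> real) \<Rightarrow> (nat \<Rightarrow> real) \<Rightarrow> real^'d \<Rightarrow> real" where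
  "Robj n w b1 b2 \<beta> = (1 / real n) * (\<Sum>i<n. reward (w i \<bullet> \<beta>) (b1 i) (b2 i))"

definition P_optimal :: "real \<Rightarrow> real \<Rightarrow> nat \<Rightarrow> (nat \<Rightarrow> real^'d) \<Rightarrow> (nat \<Rightarrow> real) \<Rightarrow> (nat \<Rightarrow> real)
    \<Rightarrow> real^'d \<Rightarrow> bool" where
  "P_optimal L U n w b1 b2 \<beta> \<longleftrightarrow>
     \<beta> \<in> boxX L U \<and> (\<forall>\<beta>' \<in> boxX L U. Robj n w b1 b2 \<beta>' \<le> Robj n w b1 b2 \<beta>)"

definition MIP_feasible :: "real \<Rightarrow> real \<Rightarrow> nat \<Rightarrow> (nat \<Rightarrow> real^'d) \<Rightarrow> (nat \<Rightarrow> real) \<Rightarrow> (nat \<Rightarrow> real)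
    \<Rightarrow> real^'d \<Rightarrow> (nat \<Rightarrow> real) \<Rightarrow> (nat \<Rightarrow> real) \<Rightarrow> (nat \<Rightarrow> real \<times> real \<times> real) \<Rightarrow> bool" where
  "MIP_feasible L U n w b1 b2 \<beta> v y z \<longleftrightarrow>
     \<beta> \<in> boxX L U \<and>
     (\<forall>i<n. v i = w i \<bullet> \<beta> \<and> (v i, y i, z i) \<in> Fset (b1 i) (b2 i) (lo L U w i) (up L U w i))"

definition MIP_obj :: "nat \<Rightarrow> (nat \<Rightarrow> real) \<Rightarrow> real" where
  "MIP_obj n y = (1 / real n) * (\<Sum>i<n. y i)"

definition MIP_optimal :: "real \<Rightarrow> real \<Rightarrow> nat \<Rightarrow> (nat \<Rightarrow> real^'d) \<Rightarrow> (nat \<Rightarrow> real) \<Rightarrow> (nat \<Rightarrow> real)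
    \<Rightarrow> real^'d \<Rightarrow> (nat \<Rightarrow> real) \<Rightarrow> (nat \<Rightarrow> real) \<Rightarrow> (nat \<Rightarrow> real \<times> real \<times> real) \<Rightarrow> bool" where
  "MIP_optimal L U n w b1 b2 \<beta> v y z \<longleftrightarrow>
     MIP_feasible L U n w b1 b2 \<beta> v y z \<and>
     (\<forall>\<beta>' v' y' z'. MIP_feasible L U n w b1 b2 \<beta>' v' y' z' \<longrightarrow> MIP_obj n y' \<le> MIP_obj n y)"

end

theory Submission
  imports Defs
begin

text \<open>For each sample the binary vector z selects which of the three branches of the reward
  is active; the big-M constants l and u make the inactive constraints redundant. Hence every
  feasible y is at most the reward, and the reward itself is feasible, so the MIP objective
  maximised over v, y, z equals R(\<beta>) for every \<beta> in the box.\<close>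

lemma boxX_eq_cbox: "boxX L U = cbox (\<chi> j. L) (\<chi> j. U :: real^'d)"
  unfolding boxX_def by (auto simp: mem_box_cart)

lemma lo_le_inner_le_up:
  assumes "\<beta> \<in> boxX L U"
  shows "lo L U w i \<le> w i \<bullet> \<beta> \<and> w i \<bullet> \<beta> \<le> up L U w i"
proof -
  let ?S = "(\<lambda>\<beta>. w i \<bullet> \<beta>) ` boxX L U"
  have "compact ?S"
    unfolding boxX_eq_cbox by (intro compact_continuous_image continuous_intros compact_cbox)
  then have bounded: "bounded ?S" by (rule compact_imp_bounded)
  have member: "w i \<bullet> \<beta> \<in> ?S" using assms by blast
  show ?thesis unfolding lo_def up_def
    using cInf_lower[OF member bounded_imp_bdd_below[OF bounded]]
      cSup_upper[OF member bounded_imp_bdd_above[OF bounded]]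
    by simp
qed

lemma Ints_unit_interval_cases: "(x::real) \<in> \<int> \<Longrightarrow> 0 \<le> x \<Longrightarrow> x \<le> 1 \<Longrightarrow> x = 0 \<or> x = 1"
  by (metis Ints_cases of_int_0 of_int_1 of_int_le_iff int_one_le_iff_zero_less
        order_antisym_conv not_le of_int_0_le_iff)

lemma Fset_le_reward:
  assumes "(v, y, z) \<in> Fset b1 b2 l u" "0 \<le> b2" "b2 \<le> b1"
  shows "y \<le> reward v b1 b2"
proof -
  obtain z1 z2 z3 where z: "z = (z1, z2, z3)" by (cases z) auto
  have "y \<le> b2 * z1 + b1 * z2" "y \<ge> b2 * (z1 + z2)" "y \<le> v + (b2 - l) * z1 - b1 * z3"
    "y \<ge> v - u * z3" "z1 + z2 + z3 = 1"
    and "z1 = 0 \<or> z1 = 1" "z2 = 0 \<or> z2 = 1" "z3 = 0 \<or> z3 = 1"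
    using assms(1) Ints_unit_interval_cases unfolding z Fset_def by auto
  then show ?thesis using assms(2,3) unfolding reward_def by auto
qed

lemma reward_in_Fset:
  assumes "l \<le> v" "v \<le> u" "0 \<le> b2" "b2 \<le> b1"
  shows "\<exists>z. (v, reward v b1 b2, z) \<in> Fset b1 b2 l u"
proof -
  consider "v \<le> b2" | "b2 < v" "v \<le> b1" | "b1 < v" by linarith
  then show ?thesis
  proof cases
    case 1
    then show ?thesis using assms by (intro exI[of _ "(1,0,0)"]) (auto simp: Fset_def reward_def)
  next
    case 2
    then show ?thesis using assms by (intro exI[of _ "(0,1,0)"]) (auto simp: Fset_def reward_def)
  next
    case 3
    then show ?thesis using assms by (intro exI[of _ "(0,0,1)"]) (auto simp: Fset_def reward_def)
  qed
qed

context
  fixes L U :: real and n :: nat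
    and w :: "nat \<Rightarrow> real^'d" and b1 b2 :: "nat \<Rightarrow> real"
  assumes b_ord: "\<And>i. i < n \<Longrightarrow> b2 i \<le> b1 i"
    and b_nonneg: "\<And>i. i < n \<Longrightarrow> 0 \<le> b2 i"
begin

lemma MIP_obj_le_Robj:
  assumes "MIP_feasible L U n w b1 b2 \<beta> v y z"
  shows "MIP_obj n y \<le> Robj n w b1 b2 \<beta>"
proof -
  have "y i \<le> reward (w i \<bullet> \<beta>) (b1 i) (b2 i)" if "i < n" for i
    using assms that Fset_le_reward b_ord b_nonneg unfolding MIP_feasible_def by metis
  then have "(\<Sum>i<n. y i) \<le> (\<Sum>i<n. reward (w i \<bullet> \<beta>) (b1 i) (b2 i))"
    by (intro sum_mono) auto
  then show ?thesis unfolding MIP_obj_def Robj_def by (intro mult_left_mono) auto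
qed

lemma MIP_feasible_attains_Robj:
  assumes "\<beta> \<in> boxX L U"
  obtains v y z where "MIP_feasible L U n w b1 b2 \<beta> v y z" "MIP_obj n y = Robj n w b1 b2 \<beta>"
proof -
  let ?v = "\<lambda>i. w i \<bullet> \<beta>"
  let ?y = "\<lambda>i. reward (w i \<bullet> \<beta>) (b1 i) (b2 i)"
  have "\<forall>i. \<exists>z. i < n \<longrightarrow> (?v i, ?y i, z) \<in> Fset (b1 i) (b2 i) (lo L U w i) (up L U w i)"
    using reward_in_Fset lo_le_inner_le_up[OF assms] b_ord b_nonneg by metis
  then obtain z where "\<forall>i<n. (?v i, ?y i, z i) \<in> Fset (b1 i) (b2 i) (lo L U w i) (up L U w i)"
    by metis
  then show thesis
    using assms by (intro that[of ?v ?y z]) (auto simp: MIP_feasible_def MIP_obj_def Robj_def)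
qed

lemma MIP_optimal_imp_P_optimal:
  assumes opt: "MIP_optimal L U n w b1 b2 \<beta> v y z"
  shows "P_optimal L U n w b1 b2 \<beta>"
  unfolding P_optimal_def
proof (intro conjI ballI)
  have feasible: "MIP_feasible L U n w b1 b2 \<beta> v y z"
    using opt unfolding MIP_optimal_def by blast
  then show "\<beta> \<in> boxX L U" unfolding MIP_feasible_def by blast
  fix \<beta>' :: "real^'d" assume "\<beta>' \<in> boxX L U"
  then obtain v' y' z' where
    "MIP_feasible L U n w b1 b2 \<beta>' v' y' z'" "MIP_obj n y' = Robj n w b1 b2 \<beta>'"
    by (rule MIP_feasible_attains_Robj)
  then show "Robj n w b1 b2 \<beta>' \<le> Robj n w b1 b2 \<beta>"
    using opt MIP_obj_le_Robj[OF feasible] unfolding MIP_optimal_def by fastforce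
qed

lemma P_optimal_imp_MIP_optimal:
  assumes opt: "P_optimal L U n w b1 b2 \<beta>"
  shows "\<exists>v y z. MIP_optimal L U n w b1 b2 \<beta> v y z"
proof -
  from opt have "\<beta> \<in> boxX L U" unfolding P_optimal_def by blast
  then obtain v y z where feasible: "MIP_feasible L U n w b1 b2 \<beta> v y z"
    and attained: "MIP_obj n y = Robj n w b1 b2 \<beta>"
    by (rule MIP_feasible_attains_Robj)
  have "MIP_obj n y' \<le> MIP_obj n y" if "MIP_feasible L U n w b1 b2 \<beta>' v' y' z'" for \<beta>' :: "real^'d" and v' y' z'
  proof -
    have "\<beta>' \<in> boxX L U" using that unfolding MIP_feasible_def by blast
    then show ?thesis
      using MIP_obj_le_Robj[OF that] opt attained unfolding P_optimal_def by fastforce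
  qed
  then show ?thesis using feasible unfolding MIP_optimal_def by blast
qed

end

theorem corollary1:
  fixes L U :: real and n :: nat
    and w :: "nat \<Rightarrow> real^'d" and b1 b2 :: "nat \<Rightarrow> real"
  assumes LU: "L \<le> U"
    and b_ord: "\<And>i. i < n \<Longrightarrow> b2 i \<le> b1 i"
    and b_nonneg: "\<And>i. i < n \<Longrightarrow> 0 \<le> b2 i"
  shows "(\<forall>\<beta> v y z. MIP_optimal L U n w b1 b2 \<beta> v y z \<longrightarrow> P_optimal L U n w b1 b2 \<beta>)
       \<and> (\<forall>\<beta>. P_optimal L U n w b1 b2 \<beta> \<longrightarrow> (\<exists>v y z. MIP_optimal L U n w b1 b2 \<beta> v y z))"
  using MIP_optimal_imp_P_optimal[of n b2 b1] P_optimal_imp_MIP_optimal[of n b2 b1] b_ord b_nonneg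
  by blast

end
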